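(* Let $f:\mathbb{R}^n\to\mathbb{R}$ have $L$-Lipschitz continuous gradient ($L>0$), i.e. $\|\nabla f(x)-\nabla f(y)\|\le L\|x-y\|$ for all $x,y$, and satisfy the Polyak–Łojasiewicz condition with constant $\mu>0$: $f(x)-f^*\le \frac{1}{2\mu}\|\nabla f(x)\|^2$ for all $x\in\mathbb{R}^n$, where $f^*=f(x_* )$ for a minimizer $x_*$ of $f$. Let $\Delta>0$ and suppose that at every point $x$ an inexact gradient $\widetilde{\nabla}f(x)$ is available with $\nabla f(x)=\widetilde{\nabla}f(x)+v(x)$, $\|v(x)\|\le\Delta$. Consider the gradient method $x_{k+1}=x_k-\frac{1}{L}\widetilde{\nabla}f(x_k)$ started from $x_0$, and suppose the stopping criterion $\|\widetilde{\nabla}f(x_k)\|\le\sqrt{6}\,\Delta$ is satisfied for the first time at iteration $k=N$. Then the output point $\widehat{x}=x_N$ satisfies $$f(\widehat{x})-f^*\le\frac{7\Delta^2}{\mu},$$ and the number of iterations satisfies $$N<\frac{2L}{\Delta^2}\bigl(f(x_0)-f^*\bigr).$$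
   Context: $\|\cdot\|$ is the Euclidean norm. "Satisfied for the first time at iteration $N$" means $\|\widetilde{\nabla}f(x_k)\|>\sqrt6\Delta$ for all $k=0,\dots,N-1$ and $\|\widetilde{\nabla}f(x_N)\|\le\sqrt6\Delta$. *)

theory Defs
  imports "HOL-Analysis.Analysis"
begin

end

theory Submission
  imports Defs
begin

(*
  An L-Lipschitz gradient gives the quadratic upper bound
  f (x + d) \<le> f x + \<langle>g x, d\<rangle> + L/2 \<parallel>d\<parallel>\<^sup>2. Applied to the step d = -a/L with
  \<parallel>g x - a\<parallel> \<le> \<Delta>, it shows that f decreases by at least
  (\<parallel>a\<parallel>\<^sup>2 - 2\<Delta>\<parallel>a\<parallel>)/(2L), which exceeds \<Delta>\<^sup>2/(2L) as long as the
  stopping test \<parallel>a\<parallel> \<le> \<surd>6 \<Delta> fails. Summing these decreases over the N steps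
  and using f \<ge> f\<^sup>* bounds N. At the output point \<parallel>\<nabla>f\<parallel> \<le> (\<surd>6 + 1)\<Delta>, and
  (\<surd>6 + 1)\<^sup>2 \<le> 14, so the PL inequality gives f - f\<^sup>* \<le> 7\<Delta>\<^sup>2/\<mu>.
*)

lemma lipschitz_gradient_quadratic_upper_bound:
  fixes f :: "'a::real_inner \<Rightarrow> real"
  assumes grad: "\<And>y. GDERIV f y :> g y"
    and lip: "\<And>y z. norm (g y - g z) \<le> L * norm (y - z)"
  shows "f (x + d) \<le> f x + inner (g x) d + L / 2 * (norm d)\<^sup>2"
proof -
  define \<phi> where "\<phi> t = f (x + t *\<^sub>R d) - t * inner (g x) d - L / 2 * t\<^sup>2 * (norm d)\<^sup>2" for t
  have f_line: "((\<lambda>t. f (x + t *\<^sub>R d)) has_real_derivative inner (g (x + t *\<^sub>R d)) d) (at t)" for t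
  proof -
    have line: "((\<lambda>t. x + t *\<^sub>R d) has_derivative (\<lambda>s. s *\<^sub>R d)) (at t)"
      by (auto intro!: derivative_eq_intros)
    have "(f has_derivative (\<lambda>h. inner h (g (x + t *\<^sub>R d)))) (at (x + t *\<^sub>R d))"
      using grad unfolding gderiv_def by blast
    from has_derivative_compose[OF line this]
    have "((\<lambda>t. f (x + t *\<^sub>R d)) has_derivative (\<lambda>s. inner (s *\<^sub>R d) (g (x + t *\<^sub>R d)))) (at t)"
      by (simp add: o_def)
    then show ?thesis
      by (simp add: has_field_derivative_def inner_commute mult_commute_abs)
  qed
  have \<phi>_deriv: "(\<phi> has_real_derivative
      inner (g (x + t *\<^sub>R d) - g x) d - L * t * (norm d)\<^sup>2) (at t)" for t
    unfolding \<phi>_def inner_diff_left by (rule f_line derivative_eq_intros refl | simp)+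
  have "inner (g (x + t *\<^sub>R d) - g x) d - L * t * (norm d)\<^sup>2 \<le> 0" if "0 \<le> t" for t
  proof -
    have "inner (g (x + t *\<^sub>R d) - g x) d \<le> norm (g (x + t *\<^sub>R d) - g x) * norm d"
      by (rule norm_cauchy_schwarz)
    also have "\<dots> \<le> L * norm (t *\<^sub>R d) * norm d"
      using lip[of "x + t *\<^sub>R d" x] by (simp add: mult_right_mono)
    also have "\<dots> = L * t * (norm d)\<^sup>2"
      using that by (simp add: power2_eq_square)
    finally show ?thesis by simp
  qed
  then have "\<phi> 1 \<le> \<phi> 0"
    by (intro DERIV_nonpos_imp_nonincreasing[of 0 1]) (use \<phi>_deriv in \<open>auto intro!: exI\<close>)
  then show ?thesis
    unfolding \<phi>_def by simp
qed

lemma inexact_gradient_step_decrease: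
  fixes f :: "'a::real_inner \<Rightarrow> real"
  assumes grad: "\<And>y. GDERIV f y :> g y"
    and lip: "\<And>y z. norm (g y - g z) \<le> L * norm (y - z)"
    and L_pos: "L > 0"
    and err: "norm (g x - a) \<le> \<Delta>"
  shows "f (x - (1 / L) *\<^sub>R a) \<le> f x - ((norm a)\<^sup>2 - 2 * \<Delta> * norm a) / (2 * L)"
proof -
  have "inner (g x - a) a \<ge> - (\<Delta> * norm a)"
  proof -
    have "\<bar>inner (g x - a) a\<bar> \<le> norm (g x - a) * norm a"
      by (rule Cauchy_Schwarz_ineq2)
    also have "\<dots> \<le> \<Delta> * norm a"
      using err by (simp add: mult_right_mono)
    finally show ?thesis by linarith
  qed
  then have ga: "inner (g x) a \<ge> (norm a)\<^sup>2 - \<Delta> * norm a"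
    by (simp add: inner_diff_left power2_norm_eq_inner)
  have "f (x - (1 / L) *\<^sub>R a)
      \<le> f x + inner (g x) (- (1 / L) *\<^sub>R a) + L / 2 * (norm (- (1 / L) *\<^sub>R a))\<^sup>2"
    using lipschitz_gradient_quadratic_upper_bound[OF grad lip, of x "- (1 / L) *\<^sub>R a"] by simp
  also have "\<dots> = f x - (2 * inner (g x) a - (norm a)\<^sup>2) / (2 * L)"
    using L_pos by (simp add: field_simps power2_eq_square)
  also have "\<dots> \<le> f x - ((norm a)\<^sup>2 - 2 * \<Delta> * norm a) / (2 * L)"
    using ga L_pos by (intro diff_left_mono divide_right_mono) auto
  finally show ?thesis .
qed

lemma excess_gt_sq_of_gt_sqrt6:
  fixes t \<Delta> :: real
  assumes "sqrt 6 * \<Delta> < t" and "0 \<le> \<Delta>"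
  shows "\<Delta>\<^sup>2 < t\<^sup>2 - 2 * \<Delta> * t"
proof -
  have "2 < sqrt 6" by (rule real_less_rsqrt) simp
  have "sqrt 6 < 5 / 2" by (rule real_less_lsqrt) (simp_all add: power2_eq_square)
  have "(sqrt 6 - 1) * \<Delta> < t - \<Delta>"
    using assms by (simp add: algebra_simps)
  with \<open>2 < sqrt 6\<close> \<open>0 \<le> \<Delta>\<close> have "((sqrt 6 - 1) * \<Delta>)\<^sup>2 < (t - \<Delta>)\<^sup>2"
    by (intro power_strict_mono) auto
  moreover have "((sqrt 6 - 1) * \<Delta>)\<^sup>2 = (7 - 2 * sqrt 6) * \<Delta>\<^sup>2"
    by (simp add: power_mult_distrib power2_eq_square algebra_simps)
  moreover have "2 * \<Delta>\<^sup>2 \<le> (7 - 2 * sqrt 6) * \<Delta>\<^sup>2"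
    using \<open>sqrt 6 < 5 / 2\<close> by (intro mult_right_mono) auto
  ultimately show ?thesis
    by (simp add: power2_eq_square algebra_simps)
qed

lemma telescope_strict_decrease:
  fixes a :: "nat \<Rightarrow> real"
  assumes "\<And>k. k < N \<Longrightarrow> a (Suc k) < a k - c" and "0 < N"
  shows "real N * c < a 0 - a N"
proof -
  have "real N * c = (\<Sum>k<N. c)" by simp
  also have "\<dots> < (\<Sum>k<N. a k - a (Suc k))"
  proof (rule sum_strict_mono)
    show "{..<N} \<noteq> {}"
      using assms(2) by auto
    show "c < a k - a (Suc k)" if "k \<in> {..<N}" for k
      using assms(1)[of k] that by simp
  qed simp
  also have "\<dots> = a 0 - a N" by (rule sum_lessThan_telescope')
  finally show ?thesis .
qed

theorem theorem2:
  fixes f :: "real ^ 'n \<Rightarrow> real"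
    and g gt :: "real ^ 'n \<Rightarrow> real ^ 'n"
    and x :: "nat \<Rightarrow> real ^ 'n"
    and xs :: "real ^ 'n"
    and L \<mu> \<Delta> :: real and N :: nat
  assumes grad: "\<And>y. GDERIV f y :> g y"
    and L_pos: "L > 0"
    and lip: "\<And>y z. norm (g y - g z) \<le> L * norm (y - z)"
    and mu_pos: "\<mu> > 0"
    and xs_min: "\<And>y. f xs \<le> f y"
    and PL: "\<And>y. f y - f xs \<le> (1 / (2 * \<mu>)) * (norm (g y))\<^sup>2"
    and Delta_pos: "\<Delta> > 0"
    and inexact: "\<And>y. norm (g y - gt y) \<le> \<Delta>"
    and iter: "\<And>k. x (Suc k) = x k - (1 / L) *\<^sub>R gt (x k)"
    and not_stop: "\<And>k. k < N \<Longrightarrow> norm (gt (x k)) > sqrt 6 * \<Delta>"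
    and stop: "norm (gt (x N)) \<le> sqrt 6 * \<Delta>"
  shows "f (x N) - f xs \<le> 7 * \<Delta>\<^sup>2 / \<mu>
         \<and> (0 < N \<longrightarrow> real N < 2 * L / \<Delta>\<^sup>2 * (f (x 0) - f xs))"
proof
  have "norm (g (x N)) \<le> sqrt 6 * \<Delta> + \<Delta>"
    using norm_triangle_sub[of "g (x N)" "gt (x N)"] stop inexact[of "x N"] by linarith
  then have "(norm (g (x N)))\<^sup>2 \<le> (7 + 2 * sqrt 6) * \<Delta>\<^sup>2"
    using power_mono[of _ _ 2] by (fastforce simp: power2_eq_square algebra_simps)
  also have "\<dots> \<le> 14 * \<Delta>\<^sup>2"
    using real_less_lsqrt[of "7 / 2" 6] by (intro mult_right_mono) (auto simp: power2_eq_square)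
  finally show "f (x N) - f xs \<le> 7 * \<Delta>\<^sup>2 / \<mu>"
    using PL[of "x N"] mu_pos by (simp add: field_simps)
next
  have "f (x (Suc k)) < f (x k) - \<Delta>\<^sup>2 / (2 * L)" if "k < N" for k
    using inexact_gradient_step_decrease[OF grad lip L_pos inexact[of "x k"]]
      excess_gt_sq_of_gt_sqrt6[OF not_stop[OF that]] Delta_pos L_pos iter[of k]
    by (smt (verit) divide_strict_right_mono)
  then have "0 < N \<longrightarrow> real N * (\<Delta>\<^sup>2 / (2 * L)) < f (x 0) - f (x N)"
    using telescope_strict_decrease[of N "\<lambda>k. f (x k)" "\<Delta>\<^sup>2 / (2 * L)"] by blast
  then have "0 < N \<longrightarrow> real N * (\<Delta>\<^sup>2 / (2 * L)) < f (x 0) - f xs"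
    using xs_min[of "x N"] by linarith
  then show "0 < N \<longrightarrow> real N < 2 * L / \<Delta>\<^sup>2 * (f (x 0) - f xs)"
    using L_pos Delta_pos by (auto simp: field_simps)
qed

end
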